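(* Let $\frac12<H_1<H_2<1$. There is a constant $C=C_{H_1,H_2}>0$ depending only on $H_1,H_2$ such that for all $0<s<u$, $$0\le k(s,u)=k(u,s)\le C\,s^{1-2H_1}(u-s)^{2H_2-2H_1-1}.$$ Moreover $0\le\partial_tK_{H_1,H_2}(t,s)\le C\,s^{1/2-H_2}t^{H_2-H_1}(t-s)^{H_2-H_1-1}$ for all $0<s<t$.
   Context: For $0<s<t$ let $K_{H_1,H_2}(t,s)=\beta_{H_2}s^{1/2-H_2}\int_s^t (t-u)^{1/2-H_1}u^{H_2-H_1}(u-s)^{H_2-3/2}du$, and $K_{H_1,H_2}(t,s)=0$ for $s\ge t$, where $\beta_H=\big(H(2H-1)/\mathrm B(H-\frac12,2-2H)\big)^{1/2}$ and $\mathrm B$ is the Beta function. $\partial_tK_{H_1,H_2}(t,s)$ is the derivative in the first variable. $k(s,u)=\int_0^{s\wedge u}\partial_sK_{H_1,H_2}(s,v)\partial_uK_{H_1,H_2}(u,v)dv$ for $s,u>0$. *)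

theory Defs
  imports "HOL-Analysis.Analysis"
begin

definition betaH :: "real \<Rightarrow> real" where
  "betaH H = sqrt (H * (2*H - 1) / Beta (H - 1/2) (2 - 2*H))"

definition KH :: "real \<Rightarrow> real \<Rightarrow> real \<Rightarrow> real \<Rightarrow> real" where
  "KH H1 H2 t s =
     (if 0 < s \<and> s < t then
        betaH H2 * s powr (1/2 - H2) *
        (LBINT u=s..t. (t - u) powr (1/2 - H1) * u powr (H2 - H1) * (u - s) powr (H2 - 3/2))
      else 0)"

definition dKH :: "real \<Rightarrow> real \<Rightarrow> real \<Rightarrow> real \<Rightarrow> real" where
  "dKH H1 H2 t s = deriv (\<lambda>t'. KH H1 H2 t' s) t"

definition kH :: "real \<Rightarrow> real \<Rightarrow> real \<Rightarrow> real \<Rightarrow> real" where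
  "kH H1 H2 s u = (LBINT v=0..min s u. dKH H1 H2 s v * dKH H1 H2 u v)"

end

theory Submission
  imports Defs
begin

text \<open>
  Substituting u = s + (t - s) x gives K(t,s) = beta s^(1/2 - H2) (t - s)^a G(s,t) with a = H2 - H1,
  where G(s,t) averages (s + (t - s) x)^a against the Beta(H2 - 1/2, 3/2 - H1) density.
  Differentiating under the integral sign, both G and (t - s)^a d/dt G are at most a constant
  times t^a, which gives the bound for d/dt K. Inserting it twice into k(s,u) leaves the integral
  over (0,s) of v^(1 - 2 H2) s^a u^a (s - v)^(a - 1) (u - v)^(a - 1). The scaling v = s y reduces
  it to s = 1, u = 1 + d. There the singular factor (1 - y)^(a - 1) (1 - y + d)^(a - 1) near y = 1
  integrates to O(d^(2a - 1)) since a < 1/2 makes r^(2a - 2) integrable at infinity, and away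
  from y = 1 the integrand is a Beta density times O(d^(2a - 1)).
\<close>

section \<open>Differentiation under the integral sign\<close>

lemma integral_dominated_convergence_at:
  fixes s :: "real \<Rightarrow> 'a \<Rightarrow> real" and w f :: "'a \<Rightarrow> real"
  assumes "f \<in> borel_measurable M" "integrable M w"
    and lim: "AE x in M. ((\<lambda>y. s y x) \<longlongrightarrow> f x) (at t0)"
    and bound: "\<forall>\<^sub>F y in at t0. s y \<in> borel_measurable M \<and> (AE x in M. norm (s y x) \<le> w x)"
  shows "((\<lambda>y. integral\<^sup>L M (s y)) \<longlongrightarrow> integral\<^sup>L M f) (at t0)"
  unfolding tendsto_at_iff_sequentially comp_def
proof (intro allI impI)
  fix X :: "nat \<Rightarrow> real" assume "\<forall>i. X i \<in> UNIV - {t0}" "X \<longlonglongrightarrow> t0"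
  then have X: "filterlim X (at t0) sequentially"
    by (auto simp: filterlim_at intro: always_eventually)
  from filterlim_iff[THEN iffD1, OF X, rule_format, OF bound]
  obtain N where N: "\<And>n. N \<le> n \<Longrightarrow> s (X n) \<in> borel_measurable M \<and> (AE x in M. norm (s (X n) x) \<le> w x)"
    by (auto simp: eventually_sequentially)
  show "(\<lambda>n. integral\<^sup>L M (s (X n))) \<longlonglongrightarrow> integral\<^sup>L M f"
  proof (rule LIMSEQ_offset, rule integral_dominated_convergence)
    show "s (X (n + N)) \<in> borel_measurable M" "AE x in M. norm (s (X (n + N)) x) \<le> w x" for n
      using N[of "n + N"] by auto
    show "AE x in M. (\<lambda>n. s (X (n + N)) x) \<longlonglongrightarrow> f x"
      using lim
    proof eventually_elim
      fix x assume "((\<lambda>y. s y x) \<longlongrightarrow> f x) (at t0)"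
      then show "(\<lambda>n. s (X (n + N)) x) \<longlonglongrightarrow> f x"
        by (intro LIMSEQ_ignore_initial_segment filterlim_compose[OF _ X])
    qed
  qed (use assms in auto)
qed

lemma has_real_derivative_integral_lborel:
  fixes f f' :: "real \<Rightarrow> real \<Rightarrow> real" and g :: "real \<Rightarrow> real"
  assumes e: "0 < e"
    and der: "\<And>t x. t \<in> ball t0 e \<Longrightarrow> ((\<lambda>t. f t x) has_real_derivative f' t x) (at t)"
    and bound: "\<And>t x. t \<in> ball t0 e \<Longrightarrow> \<bar>f' t x\<bar> \<le> g x"
    and "integrable lborel g"
    and int: "\<And>t. t \<in> ball t0 e \<Longrightarrow> integrable lborel (f t)"
    and "f' t0 \<in> borel_measurable lborel"
  shows "((\<lambda>t. \<integral>x. f t x \<partial>lborel) has_real_derivative (\<integral>x. f' t0 x \<partial>lborel)) (at t0)"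
proof -
  define q where "q y x = (f y x - f t0 x) / (y - t0)" for y x
  have t0: "t0 \<in> ball t0 e" using e by simp
  have lipschitz: "\<bar>f y x - f t0 x\<bar> \<le> g x * \<bar>y - t0\<bar>" if "y \<in> ball t0 e" for y x
    using field_differentiable_bound[of "ball t0 e" "\<lambda>t. f t x" "\<lambda>t. f' t x" "g x" y t0]
      der bound that e by (auto intro: has_field_derivative_at_within)
  have conv: "((\<lambda>y. \<integral>x. q y x \<partial>lborel) \<longlongrightarrow> (\<integral>x. f' t0 x \<partial>lborel)) (at t0)"
  proof (rule integral_dominated_convergence_at[where w = g])
    show "AE x in lborel. ((\<lambda>y. q y x) \<longlongrightarrow> f' t0 x) (at t0)"
      using der[OF t0] by (simp add: q_def has_field_derivative_iff)
    have "\<forall>\<^sub>F y in at t0. y \<in> ball t0 e"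
      using eventually_at_ball[OF e] by (rule eventually_mono) simp
    then show "\<forall>\<^sub>F y in at t0. q y \<in> borel_measurable lborel \<and> (AE x in lborel. norm (q y x) \<le> g x)"
    proof (rule eventually_mono, intro conjI)
      fix y assume y: "y \<in> ball t0 e"
      show "q y \<in> borel_measurable lborel"
        using int[OF y, THEN borel_measurable_integrable] int[OF t0, THEN borel_measurable_integrable]
        unfolding q_def by measurable
      show "AE x in lborel. norm (q y x) \<le> g x"
        using lipschitz[OF y]
        by (cases "y = t0") (auto simp: q_def abs_divide divide_le_eq intro!: order_trans[OF _ bound[OF t0]])
    qed
  qed (use assms in auto)
  have quotient: "(\<integral>x. q y x \<partial>lborel) = ((\<integral>x. f y x \<partial>lborel) - (\<integral>x. f t0 x \<partial>lborel)) / (y - t0)"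
    if "y \<in> ball t0 e" for y
    using int[OF that] int[OF t0] by (simp add: q_def)
  show ?thesis
    unfolding has_field_derivative_iff
    by (rule Lim_transform_within_open[OF conv, of "ball t0 e"]) (use quotient e in auto)
qed

section \<open>Averages against Beta densities\<close>

lemma interval_integral_rescale_unit:
  fixes f :: "real \<Rightarrow> real"
  assumes "s < t"
  shows "(LBINT u=s..t. f u) = (t - s) * (\<integral>x. indicator {0<..<1} x * f (s + (t - s) * x) \<partial>lborel)"
proof -
  have unit: "indicator {s<..<t} (s + (t - s) * x) = (indicator {0<..<1} x :: real)" for x
  proof -
    have "s < s + (t - s) * x \<and> s + (t - s) * x < t \<longleftrightarrow> 0 < x \<and> x < 1"
      using assms by (smt (verit) mult_less_cancel_left2 mult_pos_pos zero_less_mult_pos)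
    then show ?thesis by (simp add: indicator_def)
  qed
  have "(LBINT u=s..t. f u) = (\<integral>u. indicator {s<..<t} u * f u \<partial>lborel)"
    using assms by (simp add: interval_lebesgue_integral_def set_lebesgue_integral_def einterval_eq_Icc)
  also have "\<dots> = \<bar>t - s\<bar> *\<^sub>R (\<integral>x. indicator {s<..<t} (s + (t - s) * x) * f (s + (t - s) * x) \<partial>lborel)"
    using assms by (intro lborel_integral_real_affine) auto
  finally show ?thesis using assms by (simp add: unit)
qed

lemma convex_point_bounds:
  fixes s t x :: real
  assumes "0 < s" "s < t" "0 < x" "x < 1"
  shows "s < s + (t - s) * x" "s + (t - s) * x < t" "(t - s) * x < s + (t - s) * x"
proof -
  have "0 < (t - s) * x" using assms by simp
  moreover have "(t - s) * x < t - s" using mult_strict_left_mono[of x 1 "t - s"] assms by simp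
  ultimately show "s < s + (t - s) * x" "s + (t - s) * x < t" "(t - s) * x < s + (t - s) * x"
    using assms by linarith+
qed

lemma shifted_powr_le:
  fixes a s t x :: real
  assumes a: "0 < a" "a < 1" and s: "0 < s" "s < t" and x: "0 < x" "x < 1"
  shows "(s + (t - s) * x) powr (a - 1) * x \<le> s powr (a - 1)"
    and "(t - s) powr a * ((s + (t - s) * x) powr (a - 1) * x) \<le> t powr a * (t - s) powr (a - 1)"
proof -
  note y = convex_point_bounds[OF s x]
  have "(s + (t - s) * x) powr (a - 1) \<le> s powr (a - 1)"
    using powr_mono2'[of "a - 1" s "s + (t - s) * x"] y s a by simp
  then have "(s + (t - s) * x) powr (a - 1) * x \<le> s powr (a - 1) * 1"
    using x by (intro mult_mono) auto
  then show "(s + (t - s) * x) powr (a - 1) * x \<le> s powr (a - 1)" by simp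
  have "(s + (t - s) * x) powr (a - 1) \<le> ((t - s) * x) powr (a - 1)"
    using powr_mono2'[of "a - 1" "(t - s) * x" "s + (t - s) * x"] y s a x by simp
  then have "(s + (t - s) * x) powr (a - 1) * x \<le> ((t - s) * x) powr (a - 1) * x"
    using x by (intro mult_right_mono) auto
  also have "\<dots> = (t - s) powr (a - 1) * x powr a"
    using s x by (simp add: powr_mult powr_diff)
  also have "\<dots> \<le> (t - s) powr (a - 1)"
    using x a by (simp add: mult_left_le powr_le1)
  finally have "(s + (t - s) * x) powr (a - 1) * x \<le> (t - s) powr (a - 1)" .
  moreover have "(t - s) powr a \<le> t powr a"
    using s a by (intro powr_mono2) auto
  ultimately show "(t - s) powr a * ((s + (t - s) * x) powr (a - 1) * x) \<le> t powr a * (t - s) powr (a - 1)"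
    using x by (intro mult_mono) auto
qed

lemma Beta_pos: "0 < p \<Longrightarrow> 0 < q \<Longrightarrow> 0 < Beta p (q::real)"
  by (simp add: Beta_def)

definition beta_density :: "real \<Rightarrow> real \<Rightarrow> real \<Rightarrow> real" where
  "beta_density p q x = indicator {0<..<1} x * (x powr (p - 1) * (1 - x) powr (q - 1))"

lemma beta_density_nonneg: "0 \<le> beta_density p q x"
  by (simp add: beta_density_def)

lemma beta_density_outside: "x \<notin> {0<..<1} \<Longrightarrow> beta_density p q x = 0"
  by (simp add: beta_density_def)

lemma borel_measurable_beta_density [measurable]: "beta_density p q \<in> borel_measurable borel"
  unfolding beta_density_def by measurable

lemma nn_integral_beta_density:
  assumes "0 < p" "0 < q"
  shows "(\<integral>\<^sup>+x. ennreal (beta_density p q x) \<partial>lborel) = ennreal (Beta p q)"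
proof -
  have "((\<lambda>x. x powr (p - 1) * (1 - x) powr (q - 1)) has_integral Beta p q) {0<..<1}"
    using has_integral_Beta_real[OF assms] by (simp add: has_integral_Icc_iff_Ioo)
  then have "(\<integral>\<^sup>+x. ennreal (x powr (p - 1) * (1 - x) powr (q - 1)) * indicator {0<..<1} x \<partial>lborel)
      = ennreal (Beta p q)"
    by (intro nn_integral_has_integral_lebesgue') auto
  then show ?thesis
    by (simp add: beta_density_def indicator_mult_ennreal mult.commute)
qed

lemma has_bochner_integral_beta_density:
  assumes "0 < p" "0 < q"
  shows "has_bochner_integral lborel (beta_density p q) (Beta p q)"
  using assms Beta_pos[OF assms]
  by (intro has_bochner_integral_nn_integral nn_integral_beta_density) (auto simp: beta_density_nonneg)

lemma
  assumes "0 < p" "0 < q"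
  shows integrable_beta_density: "integrable lborel (beta_density p q)"
    and integral_beta_density: "(\<integral>x. beta_density p q x \<partial>lborel) = Beta p q"
  using has_bochner_integral_beta_density[OF assms] by (simp_all add: has_bochner_integral_iff)

lemma integrable_beta_density_times:
  assumes "0 < p" "0 < q" "g \<in> borel_measurable lborel"
    and "\<And>x. \<bar>g x\<bar> \<le> beta_density p q x * c"
  shows "integrable lborel g"
proof (rule Bochner_Integration.integrable_bound)
  show "integrable lborel (\<lambda>x. beta_density p q x * c)"
    using integrable_beta_density[OF assms(1,2)] by simp
  show "AE x in lborel. norm (g x) \<le> norm (beta_density p q x * c)"
    using assms(4) by (intro AE_I2) (metis abs_ge_self order_trans real_norm_def)
qed (use assms in auto)

lemma beta_density_mult_le:
  assumes "x \<in> {0<..<1} \<Longrightarrow> f \<le> g"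
  shows "beta_density p q x * f \<le> beta_density p q x * g"
  using assms beta_density_nonneg[of p q x]
  by (cases "x \<in> {0<..<1}") (auto simp: beta_density_outside intro: mult_left_mono)

definition beta_profile :: "real \<Rightarrow> real \<Rightarrow> real \<Rightarrow> real \<Rightarrow> real \<Rightarrow> real" where
  "beta_profile p q a s t = (\<integral>x. beta_density p q x * (s + (t - s) * x) powr a \<partial>lborel)"

definition beta_profile_deriv :: "real \<Rightarrow> real \<Rightarrow> real \<Rightarrow> real \<Rightarrow> real \<Rightarrow> real" where
  "beta_profile_deriv p q a s t = (\<integral>x. beta_density p q x * (a * (s + (t - s) * x) powr (a - 1) * x) \<partial>lborel)"

lemma beta_profile_integrand_bounds:
  fixes a s t x :: real
  assumes "0 \<le> a" "0 < s" "s < t"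
  shows "0 \<le> beta_density p q x * (s + (t - s) * x) powr a"
    and "beta_density p q x * (s + (t - s) * x) powr a \<le> beta_density p q x * t powr a"
proof -
  show "0 \<le> beta_density p q x * (s + (t - s) * x) powr a"
    by (simp add: beta_density_nonneg)
  show "beta_density p q x * (s + (t - s) * x) powr a \<le> beta_density p q x * t powr a"
    using convex_point_bounds[OF assms(2,3), of x] assms by (intro beta_density_mult_le powr_mono2) auto
qed

lemma beta_profile_deriv_integrand_bounds:
  fixes a s t x :: real
  assumes a: "0 < a" "a < 1" and s: "0 < s" "s < t"
  shows "0 \<le> beta_density p q x * (a * (s + (t - s) * x) powr (a - 1) * x)"
    and "beta_density p q x * (a * (s + (t - s) * x) powr (a - 1) * x) \<le> beta_density p q x * (a * s powr (a - 1))"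
    and "(t - s) powr a * (beta_density p q x * (a * (s + (t - s) * x) powr (a - 1) * x))
      \<le> beta_density p q x * (a * t powr a * (t - s) powr (a - 1))"
proof -
  show "0 \<le> beta_density p q x * (a * (s + (t - s) * x) powr (a - 1) * x)"
    using beta_density_mult_le[of x 0 "a * (s + (t - s) * x) powr (a - 1) * x"] a by simp
  show "beta_density p q x * (a * (s + (t - s) * x) powr (a - 1) * x) \<le> beta_density p q x * (a * s powr (a - 1))"
    using shifted_powr_le(1)[OF a s] a by (intro beta_density_mult_le) (simp add: mult.assoc)
  have "beta_density p q x * ((t - s) powr a * (a * (s + (t - s) * x) powr (a - 1) * x))
      \<le> beta_density p q x * (a * t powr a * (t - s) powr (a - 1))"
    using shifted_powr_le(2)[OF a s] a by (intro beta_density_mult_le) (simp add: ac_simps)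
  then show "(t - s) powr a * (beta_density p q x * (a * (s + (t - s) * x) powr (a - 1) * x))
      \<le> beta_density p q x * (a * t powr a * (t - s) powr (a - 1))"
    by (simp add: ac_simps)
qed

lemma beta_profile_bounds:
  assumes "0 < p" "0 < q" "0 \<le> a" "0 < s" "s < t"
  shows "integrable lborel (\<lambda>x. beta_density p q x * (s + (t - s) * x) powr a)"
    and "0 \<le> beta_profile p q a s t"
    and "beta_profile p q a s t \<le> t powr a * Beta p q"
proof -
  note pointwise = beta_profile_integrand_bounds[OF assms(3-5)]
  show int: "integrable lborel (\<lambda>x. beta_density p q x * (s + (t - s) * x) powr a)"
    using pointwise by (intro integrable_beta_density_times[OF assms(1,2)]) auto
  show "0 \<le> beta_profile p q a s t"
    unfolding beta_profile_def using pointwise(1) by (intro integral_nonneg_AE AE_I2)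
  have "beta_profile p q a s t \<le> (\<integral>x. beta_density p q x * t powr a \<partial>lborel)"
    unfolding beta_profile_def
    using int pointwise(2) integrable_beta_density[OF assms(1,2)] by (intro integral_mono) auto
  also have "\<dots> = t powr a * Beta p q"
    using integral_beta_density[OF assms(1,2)] by simp
  finally show "beta_profile p q a s t \<le> t powr a * Beta p q" .
qed

lemma beta_profile_deriv_bounds:
  assumes "0 < p" "0 < q" "0 < a" "a < 1" "0 < s" "s < t"
  shows "0 \<le> beta_profile_deriv p q a s t"
    and "(t - s) powr a * beta_profile_deriv p q a s t \<le> a * t powr a * (t - s) powr (a - 1) * Beta p q"
proof -
  note pointwise = beta_profile_deriv_integrand_bounds[OF assms(3-6)]
  have int: "integrable lborel (\<lambda>x. beta_density p q x * (a * (s + (t - s) * x) powr (a - 1) * x))"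
    using pointwise(1,2) by (intro integrable_beta_density_times[OF assms(1,2)]) auto
  show "0 \<le> beta_profile_deriv p q a s t"
    unfolding beta_profile_deriv_def using pointwise(1) by (intro integral_nonneg_AE AE_I2)
  have "(t - s) powr a * beta_profile_deriv p q a s t
      \<le> (\<integral>x. beta_density p q x * (a * t powr a * (t - s) powr (a - 1)) \<partial>lborel)"
    unfolding beta_profile_deriv_def integral_mult_right_zero[symmetric]
    using int pointwise(3) integrable_beta_density[OF assms(1,2)] by (intro integral_mono) auto
  also have "\<dots> = a * t powr a * (t - s) powr (a - 1) * Beta p q"
    using integral_beta_density[OF assms(1,2)] by simp
  finally show "(t - s) powr a * beta_profile_deriv p q a s t \<le> a * t powr a * (t - s) powr (a - 1) * Beta p q" .
qed

lemma has_real_derivative_beta_profile: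
  assumes pq: "0 < p" "0 < q" and a: "0 < a" "a < 1" and s: "0 < s" "s < t"
  shows "(beta_profile p q a s has_real_derivative beta_profile_deriv p q a s t) (at t)"
proof -
  have near: "s < t'" if "t' \<in> ball t (t - s)" for t'
    using that by (auto simp: dist_real_def)
  have "((\<lambda>t. \<integral>x. beta_density p q x * (s + (t - s) * x) powr a \<partial>lborel) has_real_derivative
      (\<integral>x. beta_density p q x * (a * (s + (t - s) * x) powr (a - 1) * x) \<partial>lborel)) (at t)"
  proof (rule has_real_derivative_integral_lborel[where g = "\<lambda>x. beta_density p q x * (a * s powr (a - 1))"])
    fix t' x assume t': "t' \<in> ball t (t - s)"
    show "((\<lambda>t. beta_density p q x * (s + (t - s) * x) powr a) has_real_derivative
        beta_density p q x * (a * (s + (t' - s) * x) powr (a - 1) * x)) (at t')"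
    proof (cases "x \<in> {0<..<1}")
      case True
      have "0 < s + (t' - s) * x"
        using convex_point_bounds[OF s(1) near[OF t'], of x] True s by auto
      then show ?thesis
        by (auto intro!: derivative_eq_intros)
    qed (simp add: beta_density_outside)
    show "\<bar>beta_density p q x * (a * (s + (t' - s) * x) powr (a - 1) * x)\<bar>
        \<le> beta_density p q x * (a * s powr (a - 1))"
      using beta_profile_deriv_integrand_bounds(1,2)[OF a s(1) near[OF t'], of p q x] by simp
    show "integrable lborel (\<lambda>x. beta_density p q x * (s + (t' - s) * x) powr a)"
      using beta_profile_bounds(1)[OF pq _ s(1) near[OF t']] a by simp
  qed (use s integrable_beta_density[OF pq] in auto)
  then show ?thesis
    unfolding beta_profile_def beta_profile_deriv_def .
qed

section \<open>The derivative of K\<close>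

lemma betaH_nonneg: "1/2 < H \<Longrightarrow> H < 1 \<Longrightarrow> 0 \<le> betaH H"
  unfolding betaH_def using Beta_pos[of "H - 1/2" "2 - 2*H"]
  by (intro real_sqrt_ge_zero divide_nonneg_nonneg) auto

lemma KH_eq_beta_profile:
  assumes "0 < s" "s < t"
  shows "KH H1 H2 t s = betaH H2 * s powr (1/2 - H2) *
    ((t - s) powr (H2 - H1) * beta_profile (H2 - 1/2) (3/2 - H1) (H2 - H1) s t)"
proof -
  have integrand: "indicator {0<..<1} x *
      ((t - (s + (t - s) * x)) powr (1/2 - H1) * (s + (t - s) * x) powr (H2 - H1) * (s + (t - s) * x - s) powr (H2 - 3/2))
    = (t - s) powr (H2 - H1 - 1) * (beta_density (H2 - 1/2) (3/2 - H1) x * (s + (t - s) * x) powr (H2 - H1))" for x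
  proof (cases "x \<in> {0<..<1}")
    case True
    have "t - (s + (t - s) * x) = (t - s) * (1 - x)" "s + (t - s) * x - s = (t - s) * x"
      by (simp_all add: algebra_simps)
    moreover have "(t - s) powr (1/2 - H1) * (t - s) powr (H2 - 3/2) = (t - s) powr (H2 - H1 - 1)"
      by (simp add: powr_add[symmetric])
    ultimately show ?thesis
      using True assms by (simp add: beta_density_def powr_mult)
  qed (simp add: beta_density_def)
  have "(LBINT u=s..t. (t - u) powr (1/2 - H1) * u powr (H2 - H1) * (u - s) powr (H2 - 3/2))
      = (t - s) * ((t - s) powr (H2 - H1 - 1) * beta_profile (H2 - 1/2) (3/2 - H1) (H2 - H1) s t)"
    unfolding interval_integral_rescale_unit[OF assms(2)] integrand beta_profile_def by simp
  also have "\<dots> = (t - s) powr (H2 - H1) * beta_profile (H2 - 1/2) (3/2 - H1) (H2 - H1) s t"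
    using assms by (simp add: powr_mult_base)
  finally show ?thesis
    using assms by (simp add: KH_def)
qed

definition dKH_bound_const :: "real \<Rightarrow> real \<Rightarrow> real" where
  "dKH_bound_const H1 H2 = 2 * (H2 - H1) * betaH H2 * Beta (H2 - 1/2) (3/2 - H1)"

lemma dKH_bounds:
  assumes H: "1/2 < H1" "H1 < H2" "H2 < 1" and s: "0 < s" "s < t"
  shows "(\<lambda>t'. KH H1 H2 t' s) differentiable (at t)"
    and "0 \<le> dKH H1 H2 t s"
    and "dKH H1 H2 t s \<le> dKH_bound_const H1 H2 * s powr (1/2 - H2) * t powr (H2 - H1) * (t - s) powr (H2 - H1 - 1)"
proof -
  define a where "a = H2 - H1"
  define c where "c = betaH H2 * s powr (1/2 - H2)"
  define B where "B = Beta (H2 - 1/2) (3/2 - H1)"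
  define G where "G = beta_profile (H2 - 1/2) (3/2 - H1) a s"
  define G' where "G' = beta_profile_deriv (H2 - 1/2) (3/2 - H1) a s t"
  have pq: "0 < H2 - 1/2" "0 < 3/2 - H1" and a: "0 < a" "a < 1"
    using H by (auto simp: a_def)
  have c: "0 \<le> c"
    using betaH_nonneg[of H2] H by (simp add: c_def)
  have G: "0 \<le> G t" "G t \<le> t powr a * B"
    using beta_profile_bounds(2,3)[OF pq _ s] a by (auto simp: G_def B_def)
  have G': "0 \<le> G'" "(t - s) powr a * G' \<le> a * t powr a * (t - s) powr (a - 1) * B"
    using beta_profile_deriv_bounds[OF pq a s] by (simp_all add: G'_def B_def)
  have "((\<lambda>t. c * ((t - s) powr a * G t)) has_real_derivative
      c * (a * (t - s) powr (a - 1) * G t + (t - s) powr a * G')) (at t)"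
    using has_real_derivative_beta_profile[OF pq a s] s
    by (auto intro!: derivative_eq_intros simp: G_def G'_def algebra_simps)
  then have deriv: "((\<lambda>t. KH H1 H2 t s) has_real_derivative
      c * (a * (t - s) powr (a - 1) * G t + (t - s) powr a * G')) (at t)"
    by (rule has_field_derivative_transform_within_open[where S = "{s<..}"])
       (use s in \<open>auto simp: KH_eq_beta_profile a_def c_def G_def\<close>)
  then show "(\<lambda>t'. KH H1 H2 t' s) differentiable (at t)"
    by (auto intro: differentiableI has_field_derivative_imp_has_derivative)
  have dK: "dKH H1 H2 t s = c * (a * (t - s) powr (a - 1) * G t + (t - s) powr a * G')"
    unfolding dKH_def using deriv by (rule DERIV_imp_deriv)
  show "0 \<le> dKH H1 H2 t s"
    unfolding dK using c a G G' by simp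
  have "a * (t - s) powr (a - 1) * G t \<le> a * (t - s) powr (a - 1) * (t powr a * B)"
    using a G by (intro mult_left_mono) auto
  with G' have "a * (t - s) powr (a - 1) * G t + (t - s) powr a * G' \<le> 2 * a * B * t powr a * (t - s) powr (a - 1)"
    by (simp add: algebra_simps)
  with c show "dKH H1 H2 t s \<le> dKH_bound_const H1 H2 * s powr (1/2 - H2) * t powr (H2 - H1) * (t - s) powr (H2 - H1 - 1)"
    unfolding dK dKH_bound_const_def by (auto dest: mult_left_mono[of _ _ c] simp: a_def B_def c_def ac_simps)
qed

section \<open>An integrable majorant for the integrand of k\<close>

lemma one_plus_powr_le:
  fixes a d :: real
  assumes a: "0 < a" "a < 1" and d: "0 < d"
  shows "(1 + d) powr a \<le> 1 + d powr a"
proof -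
  have "(1 + d) powr a = (1 + d) * (1 + d) powr (a - 1)"
    using d by (simp add: powr_diff)
  then have "(1 + d) powr a = (1 + d) powr (a - 1) + d * (1 + d) powr (a - 1)"
    by (simp add: ring_distribs)
  moreover have "(1 + d) powr (a - 1) \<le> 1"
    using powr_mono2'[of "a - 1" 1 "1 + d"] a d by simp
  moreover have "d * (1 + d) powr (a - 1) \<le> d * d powr (a - 1)"
    using powr_mono2'[of "a - 1" d "1 + d"] a d by (intro mult_left_mono) auto
  moreover have "d * d powr (a - 1) = d powr a"
    using d by (simp add: powr_diff)
  ultimately show ?thesis by linarith
qed

lemma half_powr_le_two: "-1 \<le> e \<Longrightarrow> (1/2::real) powr e \<le> 2"
  using powr_mono'[of "-1" e "1/2::real"] by (simp add: powr_minus_divide)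

lemma powr_le_two:
  fixes e y :: real
  assumes "-1 \<le> e" "1/2 \<le> y" "y \<le> 1"
  shows "y powr e \<le> 2"
proof (cases "e \<le> 0")
  case True
  then have "y powr e \<le> (1/2) powr e"
    using powr_mono2'[of e "1/2" y] assms by simp
  also have "\<dots> \<le> 2"
    using assms(1) by (rule half_powr_le_two)
  finally show ?thesis .
qed (use assms powr_le1[of e y] in simp)

lemma powr_shifted_le:
  fixes a d r :: real
  assumes a: "0 < a" "a < 1/2" and d: "0 < d" and r: "1/2 < r"
  shows "(r + d) powr (a - 1) \<le> 2 * d powr (2*a - 1)"
proof (cases "d \<le> 1")
  case True
  have "(r + d) powr (a - 1) \<le> (1/2) powr (a - 1)"
    using powr_mono2'[of "a - 1" "1/2" "r + d"] a d r by simp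
  also have "\<dots> \<le> 2"
    using a by (intro half_powr_le_two) auto
  also have "1 \<le> d powr (2*a - 1)"
    using powr_mono2'[of "2*a - 1" d 1] True d a by simp
  then have "2 \<le> 2 * d powr (2*a - 1)" by simp
  finally show ?thesis .
next
  case False
  have "(r + d) powr (a - 1) \<le> d powr (a - 1)"
    using powr_mono2'[of "a - 1" d "r + d"] a d r by simp
  also have "\<dots> \<le> d powr (2*a - 1)"
    using False a by (intro powr_mono) auto
  finally show ?thesis
    using powr_ge_zero[of d "2*a - 1"] by linarith
qed

lemma nn_integral_indicator_Icc_powr:
  fixes d e :: real
  assumes "-1 < e" "0 \<le> d"
  shows "(\<integral>\<^sup>+r. ennreal (indicator {0..d} r * r powr e) \<partial>lborel) = ennreal (d powr (e + 1) / (e + 1))"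
proof -
  have "(\<integral>\<^sup>+r. ennreal (r powr e) * indicator {0..d} r \<partial>lborel) = ennreal (d powr (e + 1) / (e + 1))"
    using assms by (intro nn_integral_has_integral_lebesgue' has_integral_powr_from_0) auto
  moreover have "(\<lambda>r. ennreal (r powr e) * indicator {0..d} r) = (\<lambda>r. ennreal (indicator {0..d} r * r powr e))"
    by (auto simp: indicator_def)
  ultimately show ?thesis by simp
qed

lemma nn_integral_indicator_Ici_powr:
  fixes d e :: real
  assumes "e < -1" "0 < d"
  shows "(\<integral>\<^sup>+r. ennreal (indicator {d..} r * r powr e) \<partial>lborel) = ennreal (- (d powr (e + 1)) / (e + 1))"
proof -
  have "(\<integral>\<^sup>+r. ennreal (r powr e) * indicator {d..} r \<partial>lborel) = ennreal (- (d powr (e + 1)) / (e + 1))"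
    using assms by (intro nn_integral_has_integral_lebesgue' has_integral_powr_to_inf) auto
  moreover have "(\<lambda>r. ennreal (r powr e) * indicator {d..} r) = (\<lambda>r. ennreal (indicator {d..} r * r powr e))"
    by (auto simp: indicator_def)
  ultimately show ?thesis by simp
qed

lemma nn_integral_cmult_real:
  fixes g :: "'a \<Rightarrow> real"
  assumes "0 \<le> c" "g \<in> borel_measurable M"
  shows "(\<integral>\<^sup>+x. ennreal (c * g x) \<partial>M) = ennreal c * (\<integral>\<^sup>+x. ennreal (g x) \<partial>M)"
  using assms by (simp add: ennreal_mult' nn_integral_cmult)

definition shifted_product_majorant :: "real \<Rightarrow> real \<Rightarrow> real \<Rightarrow> real" where
  "shifted_product_majorant a d r =
     d powr (a - 1) * (indicator {0..d} r * r powr (a - 1)) + indicator {d..} r * r powr (2*a - 2)"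

lemma shifted_product_majorant_nonneg: "0 \<le> shifted_product_majorant a d r"
  by (simp add: shifted_product_majorant_def)

lemma borel_measurable_shifted_product_majorant [measurable]:
  "shifted_product_majorant a d \<in> borel_measurable borel"
  unfolding shifted_product_majorant_def by measurable

lemma powr_times_shifted_le:
  fixes a d r :: real
  assumes a: "a < 1" and d: "0 < d" and r: "0 < r"
  shows "r powr (a - 1) * (r + d) powr (a - 1) \<le> shifted_product_majorant a d r"
proof (cases "r \<le> d")
  case True
  have "r powr (a - 1) * (r + d) powr (a - 1) \<le> r powr (a - 1) * d powr (a - 1)"
    using powr_mono2'[of "a - 1" d "r + d"] a d r by (intro mult_left_mono) auto
  moreover have "d powr (a - 1) * (indicator {0..d} r * r powr (a - 1)) = r powr (a - 1) * d powr (a - 1)"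
    using True r by simp
  moreover have "0 \<le> indicator {d..} r * r powr (2*a - 2)"
    by simp
  ultimately show ?thesis
    unfolding shifted_product_majorant_def by linarith
next
  case False
  have "r powr (a - 1) * (r + d) powr (a - 1) \<le> r powr (a - 1) * r powr (a - 1)"
    using powr_mono2'[of "a - 1" r "r + d"] a d r by (intro mult_left_mono) auto
  also have "\<dots> = r powr (2*a - 2)"
    by (simp add: powr_add[symmetric])
  finally show ?thesis
    using False r by (simp add: shifted_product_majorant_def indicator_def)
qed

text \<open>For y < 1/2 the shifted factor is already O(d^(2a - 1)); for y \<ge> 1/2 the weight y^b is
  bounded and the singular product is absorbed by the shifted product majorant.\<close>

lemma weighted_powr_times_shifted_le:
  fixes a b d y :: real
  assumes a: "0 < a" "a < 1/2" and b: "-1 \<le> b" and d: "0 < d" and y: "0 < y" "y < 1"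
  shows "y powr b * (1 - y) powr (a - 1) * (1 - y + d) powr (a - 1)
    \<le> 2 * d powr (2*a - 1) * (y powr b * (1 - y) powr (a - 1)) + 2 * shifted_product_majorant a d (1 - y)"
proof (cases "y < 1/2")
  case True
  have "(1 - y + d) powr (a - 1) \<le> 2 * d powr (2*a - 1)"
    using True by (intro powr_shifted_le a d) auto
  then have "y powr b * (1 - y) powr (a - 1) * (1 - y + d) powr (a - 1)
      \<le> y powr b * (1 - y) powr (a - 1) * (2 * d powr (2*a - 1))"
    by (intro mult_left_mono) auto
  moreover have "0 \<le> shifted_product_majorant a d (1 - y)"
    by (rule shifted_product_majorant_nonneg)
  ultimately show ?thesis
    by (simp add: ac_simps)
next
  case False
  have "y powr b \<le> 2"
    using powr_le_two[OF b, of y] False y by simp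
  moreover have "(1 - y) powr (a - 1) * (1 - y + d) powr (a - 1) \<le> shifted_product_majorant a d (1 - y)"
    using powr_times_shifted_le[of a d "1 - y"] a d y by simp
  ultimately have "y powr b * ((1 - y) powr (a - 1) * (1 - y + d) powr (a - 1)) \<le> 2 * shifted_product_majorant a d (1 - y)"
    by (intro mult_mono) auto
  moreover have "0 \<le> 2 * d powr (2*a - 1) * (y powr b * (1 - y) powr (a - 1))"
    by simp
  ultimately show ?thesis
    by (simp only: mult.assoc)
qed

text \<open>With b = 1 - 2 H2 and a = H2 - H1 this is, up to a constant, the product of the bounds
  for d/dt K(s,v) and d/dt K(u,v).\<close>

definition kernel_majorant :: "real \<Rightarrow> real \<Rightarrow> real \<Rightarrow> real \<Rightarrow> real \<Rightarrow> real" where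
  "kernel_majorant b a s u v =
     indicator {0<..<s} v * (v powr b * s powr a * u powr a * (s - v) powr (a - 1) * (u - v) powr (a - 1))"

lemma borel_measurable_kernel_majorant [measurable]: "kernel_majorant b a s u \<in> borel_measurable borel"
  unfolding kernel_majorant_def by measurable

lemma unit_kernel_majorant_le:
  fixes a b d y :: real
  assumes a: "0 < a" "a < 1/2" and b: "-1 \<le> b" and d: "0 < d"
  shows "kernel_majorant b a 1 (1 + d) y
    \<le> 3 * d powr (2*a - 1) * beta_density (b + 1) a y + 2 * shifted_product_majorant a d (1 - y)"
proof (cases "y \<in> {0<..<1}")
  case True
  define W where "W = y powr b * (1 - y) powr (a - 1)"
  define Q where "Q = (1 - y + d) powr (a - 1)"
  have "(1 + d) powr a * Q \<le> (1 + d powr a) * Q"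
    using one_plus_powr_le[of a d] a d by (intro mult_right_mono) (auto simp: Q_def)
  also have "d powr a * Q \<le> d powr a * d powr (a - 1)"
    unfolding Q_def using powr_mono2'[of "a - 1" d "1 - y + d"] a d True by (intro mult_left_mono) auto
  then have "(1 + d powr a) * Q \<le> Q + d powr (2*a - 1)"
    by (simp add: distrib_right powr_add[symmetric])
  finally have "W * ((1 + d) powr a * Q) \<le> W * (Q + d powr (2*a - 1))"
    by (rule mult_left_mono) (simp add: W_def)
  then have "W * ((1 + d) powr a * Q) \<le> W * Q + d powr (2*a - 1) * W"
    by (simp add: algebra_simps)
  moreover have "W * Q \<le> 2 * d powr (2*a - 1) * W + 2 * shifted_product_majorant a d (1 - y)"
    using weighted_powr_times_shifted_le[OF a b d, of y] True by (simp add: W_def Q_def)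
  ultimately have "W * ((1 + d) powr a * Q) \<le> 3 * d powr (2*a - 1) * W + 2 * shifted_product_majorant a d (1 - y)"
    by linarith
  moreover have shift: "1 + d - y = 1 - y + d"
    by simp
  ultimately show ?thesis
    using True unfolding kernel_majorant_def beta_density_def W_def Q_def shift by (simp add: ac_simps)
qed (simp add: kernel_majorant_def beta_density_def shifted_product_majorant_nonneg)

lemma nn_integral_shifted_product_majorant:
  fixes a d :: real
  assumes a: "0 < a" "a < 1/2" and d: "0 < d"
  shows "(\<integral>\<^sup>+r. shifted_product_majorant a d r \<partial>lborel) = ennreal ((1/a + 1/(1 - 2*a)) * d powr (2*a - 1))"
proof -
  have "(\<integral>\<^sup>+r. shifted_product_majorant a d r \<partial>lborel)
      = ennreal (d powr (a - 1)) * (\<integral>\<^sup>+r. ennreal (indicator {0..d} r * r powr (a - 1)) \<partial>lborel)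
        + (\<integral>\<^sup>+r. ennreal (indicator {d..} r * r powr (2*a - 2)) \<partial>lborel)"
    unfolding shifted_product_majorant_def
    by (subst ennreal_plus, simp, simp, subst nn_integral_add, simp_all add: nn_integral_cmult_real)
  also have "\<dots> = ennreal (d powr (a - 1)) * ennreal (d powr a / a) + ennreal (d powr (2*a - 1) / (1 - 2*a))"
    using nn_integral_indicator_Icc_powr[of "a - 1" d] nn_integral_indicator_Ici_powr[of "2*a - 2" d] a d
    by (simp add: minus_divide_right)
  also have "\<dots> = ennreal ((1/a + 1/(1 - 2*a)) * d powr (2*a - 1))"
    using a by (simp add: ennreal_mult'[symmetric] ennreal_plus[symmetric] powr_add[symmetric] field_simps
      del: ennreal_plus)
  finally show ?thesis .
qed

lemma nn_integral_unit_kernel_majorant_le: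
  fixes a b d :: real
  assumes a: "0 < a" "a < 1/2" and b: "-1 < b" and d: "0 < d"
  shows "(\<integral>\<^sup>+y. kernel_majorant b a 1 (1 + d) y \<partial>lborel)
    \<le> ennreal ((3 * Beta (b + 1) a + 2/a + 2/(1 - 2*a)) * d powr (2*a - 1))"
proof -
  define D where "D = d powr (2*a - 1)"
  have b1: "0 < b + 1"
    using b by simp
  have reflect: "(\<integral>\<^sup>+y. shifted_product_majorant a d (1 - y) \<partial>lborel) = (\<integral>\<^sup>+r. shifted_product_majorant a d r \<partial>lborel)"
    using nn_integral_real_affine[of "\<lambda>r. ennreal (shifted_product_majorant a d r)" "-1" 1] by simp
  have "(\<integral>\<^sup>+y. kernel_majorant b a 1 (1 + d) y \<partial>lborel)
      \<le> (\<integral>\<^sup>+y. ennreal (3 * D * beta_density (b + 1) a y) + ennreal 2 * shifted_product_majorant a d (1 - y) \<partial>lborel)"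
  proof (intro nn_integral_mono)
    fix y
    have "ennreal (kernel_majorant b a 1 (1 + d) y)
        \<le> ennreal (3 * D * beta_density (b + 1) a y + 2 * shifted_product_majorant a d (1 - y))"
      using unit_kernel_majorant_le[OF a _ d, of b y] b by (intro ennreal_leI) (simp add: D_def)
    also have "\<dots> = ennreal (3 * D * beta_density (b + 1) a y) + ennreal 2 * shifted_product_majorant a d (1 - y)"
      using beta_density_nonneg[of "b + 1" a y] shifted_product_majorant_nonneg[of a d "1 - y"]
      by (simp add: D_def ennreal_plus ennreal_mult')
    finally show "ennreal (kernel_majorant b a 1 (1 + d) y)
        \<le> ennreal (3 * D * beta_density (b + 1) a y) + ennreal 2 * shifted_product_majorant a d (1 - y)" .
  qed
  also have "\<dots> = ennreal (3 * D) * (\<integral>\<^sup>+y. beta_density (b + 1) a y \<partial>lborel)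
      + ennreal 2 * (\<integral>\<^sup>+y. shifted_product_majorant a d (1 - y) \<partial>lborel)"
    by (simp add: nn_integral_add nn_integral_cmult nn_integral_cmult_real D_def)
  also have "\<dots> = ennreal (3 * D) * ennreal (Beta (b + 1) a) + ennreal 2 * ennreal ((1/a + 1/(1 - 2*a)) * D)"
    using b
    unfolding reflect nn_integral_beta_density[OF b1 a(1)] nn_integral_shifted_product_majorant[OF a d] D_def
    by simp
  also have "\<dots> = ennreal (3 * D * Beta (b + 1) a + 2 * ((1/a + 1/(1 - 2*a)) * D))"
    using Beta_pos[OF b1 a(1)] a by (simp add: D_def ennreal_plus ennreal_mult')
  also have "3 * D * Beta (b + 1) a + 2 * ((1/a + 1/(1 - 2*a)) * D) = (3 * Beta (b + 1) a + 2/a + 2/(1 - 2*a)) * D"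
    by (simp add: algebra_simps)
  finally show ?thesis
    by (simp add: D_def)
qed

lemma kernel_majorant_rescale:
  fixes a b d s y :: real
  assumes s: "0 < s" and d: "0 < d"
  shows "kernel_majorant b a s (s * (1 + d)) (s * y) = s powr (b + 4*a - 2) * kernel_majorant b a 1 (1 + d) y"
proof (cases "y \<in> {0<..<1}")
  case True
  have "s * (1 + d) - s * y = s * (1 + d - y)" "s - s * y = s * (1 - y)"
    by (simp_all add: algebra_simps)
  moreover have "s powr b * s powr a * s powr a * s powr (a - 1) * s powr (a - 1) = s powr (b + 4*a - 2)"
    by (simp add: powr_add[symmetric]) (simp add: algebra_simps)
  ultimately show ?thesis
    using True s d by (simp add: kernel_majorant_def powr_mult ac_simps)
next
  case False
  then have "s * y \<notin> {0<..<s}"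
    using s by (auto simp: zero_less_mult_iff)
  then show ?thesis
    using False by (simp add: kernel_majorant_def)
qed

lemma nn_integral_kernel_majorant_le:
  fixes a b s u :: real
  assumes a: "0 < a" "a < 1/2" and b: "-1 < b" and s: "0 < s" "s < u"
  shows "(\<integral>\<^sup>+v. kernel_majorant b a s u v \<partial>lborel)
    \<le> ennreal ((3 * Beta (b + 1) a + 2/a + 2/(1 - 2*a)) * s powr (b + 2*a) * (u - s) powr (2*a - 1))"
proof -
  define K where "K = 3 * Beta (b + 1) a + 2/a + 2/(1 - 2*a)"
  define d where "d = (u - s) / s"
  have d: "0 < d" and u: "u = s * (1 + d)"
    using s by (simp_all add: d_def field_simps)
  have K: "0 \<le> K"
    using Beta_pos[of "b + 1" a] a b by (simp add: K_def)
  have "(\<integral>\<^sup>+v. kernel_majorant b a s u v \<partial>lborel)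
      = ennreal s * (\<integral>\<^sup>+y. kernel_majorant b a s u (0 + s * y) \<partial>lborel)"
    using nn_integral_real_affine[of "\<lambda>v. ennreal (kernel_majorant b a s u v)" s 0] s by simp
  also have "(\<integral>\<^sup>+y. kernel_majorant b a s u (0 + s * y) \<partial>lborel)
      = ennreal (s powr (b + 4*a - 2)) * (\<integral>\<^sup>+y. kernel_majorant b a 1 (1 + d) y \<partial>lborel)"
    unfolding u using s d by (simp add: kernel_majorant_rescale nn_integral_cmult_real)
  also have "ennreal s * (ennreal (s powr (b + 4*a - 2)) * (\<integral>\<^sup>+y. kernel_majorant b a 1 (1 + d) y \<partial>lborel))
      \<le> ennreal s * (ennreal (s powr (b + 4*a - 2)) * ennreal (K * d powr (2*a - 1)))"
    using nn_integral_unit_kernel_majorant_le[OF a b d] by (intro mult_left_mono) (auto simp: K_def)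
  also have "\<dots> = ennreal (K * (s * s powr (b + 4*a - 2) / s powr (2*a - 1)) * (u - s) powr (2*a - 1))"
    using s K by (simp add: ennreal_mult'[symmetric] d_def powr_divide)
  also have "s * s powr (b + 4*a - 2) / s powr (2*a - 1) = s powr (b + 2*a)"
  proof -
    have "s * s powr (b + 4*a - 2) = s powr (1 + (b + 4*a - 2))"
      using s by (intro powr_mult_base) simp
    then have "s * s powr (b + 4*a - 2) / s powr (2*a - 1) = s powr (1 + (b + 4*a - 2) - (2*a - 1))"
      by (simp only: powr_diff)
    also have "1 + (b + 4*a - 2) - (2*a - 1) = b + 2*a"
      by simp
    finally show ?thesis .
  qed
  finally show ?thesis
    by (simp add: K_def mult.assoc)
qed

section \<open>Bounds for k\<close>

lemma kH_eq_integral: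
  assumes "0 < s" "s < u"
  shows "kH H1 H2 s u = (\<integral>v. indicator {0<..<s} v * (dKH H1 H2 s v * dKH H1 H2 u v) \<partial>lborel)"
  using assms by (simp add: kH_def interval_lebesgue_integral_def set_lebesgue_integral_def
    einterval_eq_Icc zero_ereal_def)

lemma dKH_product_bounds:
  assumes H: "1/2 < H1" "H1 < H2" "H2 < 1" and v: "0 < v" "v < s" "s < u"
  shows "0 \<le> dKH H1 H2 s v * dKH H1 H2 u v"
    and "dKH H1 H2 s v * dKH H1 H2 u v \<le> (dKH_bound_const H1 H2)\<^sup>2 * kernel_majorant (1 - 2*H2) (H2 - H1) s u v"
proof -
  define C where "C = dKH_bound_const H1 H2"
  define a where "a = H2 - H1"
  note dK_s = dKH_bounds(2,3)[OF H v(1,2)] and dK_u = dKH_bounds(2,3)[OF H v(1) less_trans[OF v(2,3)]]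
  show "0 \<le> dKH H1 H2 s v * dKH H1 H2 u v"
    using dK_s dK_u v by simp
  have "dKH H1 H2 s v * dKH H1 H2 u v
      \<le> (C * v powr (1/2 - H2) * s powr a * (s - v) powr (a - 1)) * (C * v powr (1/2 - H2) * u powr a * (u - v) powr (a - 1))"
    using dK_s dK_u by (intro mult_mono) (auto simp: C_def a_def intro: order_trans[OF dK_s(1)])
  also have "\<dots> = C\<^sup>2 * ((v powr (1/2 - H2) * v powr (1/2 - H2)) * s powr a * u powr a * (s - v) powr (a - 1) * (u - v) powr (a - 1))"
    by (simp add: power2_eq_square ac_simps)
  also have "v powr (1/2 - H2) * v powr (1/2 - H2) = v powr (1 - 2*H2)"
    by (simp add: powr_add[symmetric])
  finally show "dKH H1 H2 s v * dKH H1 H2 u v \<le> (dKH_bound_const H1 H2)\<^sup>2 * kernel_majorant (1 - 2*H2) (H2 - H1) s u v"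
    using v by (simp add: kernel_majorant_def C_def a_def)
qed

definition kH_bound_const :: "real \<Rightarrow> real \<Rightarrow> real" where
  "kH_bound_const H1 H2 =
     (dKH_bound_const H1 H2)\<^sup>2 * (3 * Beta (2 - 2*H2) (H2 - H1) + 2/(H2 - H1) + 2/(1 - 2*(H2 - H1)))"

lemma kH_bounds:
  assumes H: "1/2 < H1" "H1 < H2" "H2 < 1" and s: "0 < s" "s < u"
  shows "0 \<le> kH H1 H2 s u"
    and "kH H1 H2 s u \<le> kH_bound_const H1 H2 * s powr (1 - 2*H1) * (u - s) powr (2*H2 - 2*H1 - 1)"
proof -
  define a where "a = H2 - H1"
  define C where "C = dKH_bound_const H1 H2"
  define f where "f v = indicator {0<..<s} v * (dKH H1 H2 s v * dKH H1 H2 u v)" for v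
  have a: "0 < a" "a < 1/2" using H by (auto simp: a_def)
  have K: "0 \<le> 3 * Beta (2 - 2*H2) a + 2/a + 2/(1 - 2*a)"
    using Beta_pos[of "2 - 2*H2" a] H a by simp
  have pointwise: "0 \<le> f v \<and> f v \<le> C\<^sup>2 * kernel_majorant (1 - 2*H2) a s u v" for v
    using dKH_product_bounds[OF H _ _ s(2), of v]
    by (cases "v \<in> {0<..<s}") (auto simp: f_def kernel_majorant_def C_def a_def)
  have kH: "kH H1 H2 s u = (\<integral>v. f v \<partial>lborel)"
    unfolding kH_eq_integral[OF s] f_def ..
  show "0 \<le> kH H1 H2 s u"
    unfolding kH using pointwise by (intro integral_nonneg_AE AE_I2) auto
  have "(\<integral>\<^sup>+v. f v \<partial>lborel) \<le> (\<integral>\<^sup>+v. ennreal (C\<^sup>2 * kernel_majorant (1 - 2*H2) a s u v) \<partial>lborel)"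
    using pointwise by (intro nn_integral_mono ennreal_leI) auto
  also have "\<dots> = ennreal (C\<^sup>2) * (\<integral>\<^sup>+v. kernel_majorant (1 - 2*H2) a s u v \<partial>lborel)"
    by (rule nn_integral_cmult_real) auto
  also have "\<dots> \<le> ennreal (C\<^sup>2) * ennreal ((3 * Beta (1 - 2*H2 + 1) a + 2/a + 2/(1 - 2*a))
      * s powr (1 - 2*H2 + 2*a) * (u - s) powr (2*a - 1))"
    using H by (intro mult_left_mono nn_integral_kernel_majorant_le a s) auto
  also have "\<dots> = ennreal (kH_bound_const H1 H2 * s powr (1 - 2*H1) * (u - s) powr (2*H2 - 2*H1 - 1))"
    using K by (simp add: ennreal_mult'[symmetric] kH_bound_const_def C_def a_def mult.assoc)
  finally show "kH H1 H2 s u \<le> kH_bound_const H1 H2 * s powr (1 - 2*H1) * (u - s) powr (2*H2 - 2*H1 - 1)"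
    unfolding kH using K by (intro integral_real_bounded) (auto simp: kH_bound_const_def a_def)
qed

theorem mainTheorem7:
  fixes H1 H2 :: real
  assumes "1/2 < H1" and "H1 < H2" and "H2 < 1"
  shows "\<exists>C>0.
    (\<forall>s u. 0 < s \<and> s < u \<longrightarrow>
       0 \<le> kH H1 H2 s u \<and> kH H1 H2 s u = kH H1 H2 u s \<and>
       kH H1 H2 s u \<le> C * s powr (1 - 2*H1) * (u - s) powr (2*H2 - 2*H1 - 1)) \<and>
    (\<forall>s t. 0 < s \<and> s < t \<longrightarrow>
       (\<lambda>t'. KH H1 H2 t' s) differentiable (at t) \<and>
       0 \<le> dKH H1 H2 t s \<and>
       dKH H1 H2 t s \<le> C * s powr (1/2 - H2) * t powr (H2 - H1) * (t - s) powr (H2 - H1 - 1))"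
proof -
  define C where "C = max 1 (max (dKH_bound_const H1 H2) (kH_bound_const H1 H2))"
  show ?thesis
  proof (intro exI[of _ C] conjI allI impI)
    show "0 < C" by (simp add: C_def)
  next
    fix s u :: real assume "0 < s \<and> s < u"
    then have s: "0 < s" "s < u" by auto
    show "0 \<le> kH H1 H2 s u" by (rule kH_bounds(1)[OF assms s])
    show "kH H1 H2 s u = kH H1 H2 u s"
      unfolding kH_def by (simp add: min.commute mult.commute)
    show "kH H1 H2 s u \<le> C * s powr (1 - 2*H1) * (u - s) powr (2*H2 - 2*H1 - 1)"
      using kH_bounds(2)[OF assms s] by (rule order_trans) (intro mult_right_mono; simp add: C_def)
  next
    fix s t :: real assume "0 < s \<and> s < t"
    then have s: "0 < s" "s < t" by auto
    show "(\<lambda>t'. KH H1 H2 t' s) differentiable (at t)" "0 \<le> dKH H1 H2 t s"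
      using dKH_bounds(1,2)[OF assms s] by auto
    show "dKH H1 H2 t s \<le> C * s powr (1/2 - H2) * t powr (H2 - H1) * (t - s) powr (H2 - H1 - 1)"
      using dKH_bounds(3)[OF assms s] by (rule order_trans) (intro mult_right_mono; simp add: C_def)
  qed
qed

end
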